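(* Let $k$ be an algebraically closed field of characteristic $p>2$, let $q$ be a power of $p$, let $n \ge 1$ be an integer, and assume that the finite field $\mathbb{F}_{q^n} \subset k$ with $q^n$ elements contains the set $\{\alpha \in k \mid \alpha^{q-2}=1\}$. Consider the morphism $$\varphi: \mathbb{P}^1 \rightarrow \mathbb{P}^4;\quad (1:t) \mapsto (1:t:t^2-t^q:t^{q^n}-t^{q^{2n}}:t(t^{q^n}-t^{q^{2n}})).$$ Then: (a) $\varphi$ is an embedding; (b) for any point $P \in \mathbb{P}^1 \setminus \{(0:1)\}$, the set $(T_{\varphi(P)}\varphi(\mathbb{P}^1) \setminus \{\varphi(P)\}) \cap \varphi(\mathbb{P}^1)$ consists of exactly $q-2$ points; (c) the Gauss map of $\varphi(\mathbb{P}^1)$ is birational onto its image.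
   Context: For a point $Q$ of a projective curve $C \subset \mathbb{P}^N$ which is smooth on $C$, $T_QC \subset \mathbb{P}^N$ denotes the projective tangent line to $C$ at $Q$. The Gauss map of $C$ is the rational map $\gamma: C \dashrightarrow \mathbb{G}(1,\mathbb{P}^N)$ to the Grassmannian of lines in $\mathbb{P}^N$ sending a smooth point $Q \in C$ to $T_QC$. *)

theory Defs
  imports "HOL-Computational_Algebra.Computational_Algebra"
begin

(* Vectors of k^(N+1) are functions nat => 'k vanishing outside {0..N}.
   A point of projective space is the class of a nonzero vector under scaling. *)
definition pcls :: "(nat \<Rightarrow> 'k::field) \<Rightarrow> (nat \<Rightarrow> 'k) set" where
  "pcls x = {y. \<exists>c. c \<noteq> 0 \<and> y = (\<lambda>i. c * x i)}"

(* A binary form of degree d, given by its dehomogenisation f (deg f <= d):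
   F(s,t) = sum_{j<=d} coeff f j * s^(d-j) * t^j, and its partial derivatives. *)
definition hform :: "nat \<Rightarrow> 'k::field poly \<Rightarrow> 'k \<Rightarrow> 'k \<Rightarrow> 'k" where
  "hform d f s t = (\<Sum>j\<le>d. coeff f j * s ^ (d - j) * t ^ j)"

definition hform_ds :: "nat \<Rightarrow> 'k::field poly \<Rightarrow> 'k \<Rightarrow> 'k \<Rightarrow> 'k" where
  "hform_ds d f s t = (\<Sum>j\<le>d. of_nat (d - j) * coeff f j * s ^ (d - j - 1) * t ^ j)"

definition hform_dt :: "nat \<Rightarrow> 'k::field poly \<Rightarrow> 'k \<Rightarrow> 'k \<Rightarrow> 'k" where
  "hform_dt d f s t = (\<Sum>j\<le>d. of_nat j * coeff f j * s ^ (d - j) * t ^ (j - 1))"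

(* The morphism P^1 -> P^N given by the forms of vs (N+1 = length vs), on the affine cone *)
definition Fv :: "'k::field poly list \<Rightarrow> nat \<Rightarrow> 'k \<Rightarrow> 'k \<Rightarrow> nat \<Rightarrow> 'k" where
  "Fv vs d s t = (\<lambda>i. if i < length vs then hform d (vs ! i) s t else 0)"

definition Fs :: "'k::field poly list \<Rightarrow> nat \<Rightarrow> 'k \<Rightarrow> 'k \<Rightarrow> nat \<Rightarrow> 'k" where
  "Fs vs d s t = (\<lambda>i. if i < length vs then hform_ds d (vs ! i) s t else 0)"

definition Ft :: "'k::field poly list \<Rightarrow> nat \<Rightarrow> 'k \<Rightarrow> 'k \<Rightarrow> nat \<Rightarrow> 'k" where
  "Ft vs d s t = (\<lambda>i. if i < length vs then hform_dt d (vs ! i) s t else 0)"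

definition curve_img :: "'k::field poly list \<Rightarrow> nat \<Rightarrow> (nat \<Rightarrow> 'k) set set" where
  "curve_img vs d = {pcls (Fv vs d s t) | s t. (s, t) \<noteq> (0, 0)}"

(* Embedding (closed immersion) of P^1: a morphism (forms have no common zero), injective
   on points, and injective on tangent spaces (Hartshorne II.7.3). The differential at
   P=(s:t) is k^2/<P> -> k^(N+1)/<F(P)>, (a,b) |-> a dF/ds + b dF/dt; as its domain is
   1-dimensional, injective means nonzero. *)
definition is_embedding :: "'k::field poly list \<Rightarrow> nat \<Rightarrow> bool" where
  "is_embedding vs d \<longleftrightarrow>
     (\<forall>s t. (s, t) \<noteq> (0, 0) \<longrightarrow> Fv vs d s t \<noteq> (\<lambda>_. 0)) \<and>
     (\<forall>s t s' t'. (s, t) \<noteq> (0, 0) \<longrightarrow> (s', t') \<noteq> (0, 0) \<longrightarrow>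
        pcls (Fv vs d s t) = pcls (Fv vs d s' t') \<longrightarrow>
        (\<exists>c. c \<noteq> 0 \<and> s' = c * s \<and> t' = c * t)) \<and>
     (\<forall>s t. (s, t) \<noteq> (0, 0) \<longrightarrow>
        (\<exists>a b. \<not> (\<exists>c. (\<lambda>i. a * Fs vs d s t i + b * Ft vs d s t i) = (\<lambda>i. c * Fv vs d s t i))))"

(* Projective tangent line to the image curve at the image of P=(s:t):
   projectivisation of the image of the differential of the cone map. *)
definition tline :: "'k::field poly list \<Rightarrow> nat \<Rightarrow> 'k \<Rightarrow> 'k \<Rightarrow> (nat \<Rightarrow> 'k) set set" where
  "tline vs d s t = {pcls w | w. w \<noteq> (\<lambda>_. 0) \<and>
      (\<exists>a b c. w = (\<lambda>i. a * Fv vs d s t i + b * Fs vs d s t i + c * Ft vs d s t i))}"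

(* Gauss map in the chart (1:t): tangent line spanned by v(t), v'(t); Pluecker coordinates *)
definition pl :: "'k::field poly list \<Rightarrow> nat \<Rightarrow> nat \<Rightarrow> 'k poly" where
  "pl vs i j = vs ! i * pderiv (vs ! j) - vs ! j * pderiv (vs ! i)"

definition gen_field :: "'k::field poly fract set \<Rightarrow> 'k poly fract set" where
  "gen_field S = \<Inter>{K. range (\<lambda>c. to_fract [:c:]) \<subseteq> K \<and> S \<subseteq> K \<and>
      (\<forall>x\<in>K. \<forall>y\<in>K. x + y \<in> K \<and> x * y \<in> K \<and> - x \<in> K \<and> inverse x \<in> K)}"

(* Function field of the image of the Gauss map, pulled back to k(t) = k(P^1):
   generated by ratios of Pluecker coordinates. Birational onto image iff this is all of k(t). *)
definition gauss_ratios :: "'k::field poly list \<Rightarrow> 'k poly fract set" where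
  "gauss_ratios vs = {to_fract (pl vs i j) / to_fract (pl vs k l) | i j k l.
      i < j \<and> j < length vs \<and> k < l \<and> l < length vs \<and> pl vs k l \<noteq> 0}"

definition gauss_birational :: "'k::field poly list \<Rightarrow> bool" where
  "gauss_birational vs \<longleftrightarrow>
     (\<exists>k l. k < l \<and> l < length vs \<and> pl vs k l \<noteq> 0) \<and>
     to_fract [:0, 1:] \<in> gen_field (gauss_ratios vs)"

definition phi_polys :: "nat \<Rightarrow> nat \<Rightarrow> 'k::field poly list" where
  "phi_polys q n = (let X = [:0, 1:] :: 'k poly in
     [1, X, X ^ 2 - X ^ q, X ^ (q ^ n) - X ^ (q ^ (2 * n)),
      X * (X ^ (q ^ n) - X ^ (q ^ (2 * n)))])"

definition phi_deg :: "nat \<Rightarrow> nat \<Rightarrow> nat" where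
  "phi_deg q n = q ^ (2 * n) + 1"

end

theory Submission
  imports Defs
begin

text \<open>In the affine chart the curve is \<open>V(u) = (1, u, u^2 - u^q, g(u), u g(u))\<close> with
  \<open>g(u) = u^Q - u^(Q^2)\<close>, \<open>Q = q^n\<close>. As \<open>q = 0\<close> in \<open>k\<close>, the velocity is
  \<open>V'(u) = (0, 1, 2u, 0, g(u))\<close>, and both \<open>u \<mapsto> u^q\<close> and \<open>g\<close> are additive. The coordinates
  \<open>1, u\<close> make \<open>V\<close> injective and immersive, and at the point at infinity \<open>(0:0:0:0:1)\<close> the
  tangent direction is \<open>(0:0:0:1:0)\<close>, so \<open>\<phi>\<close> is an embedding. The tangent line at \<open>V(u\<^sub>0)\<close>
  is spanned by \<open>V(u\<^sub>0)\<close> and \<open>V'(u\<^sub>0)\<close>; comparing the first two coordinates, a second curve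
  point \<open>V(u\<^sub>0 + w)\<close> lies on it iff \<open>V(u\<^sub>0 + w) = V(u\<^sub>0) + w V'(u\<^sub>0)\<close>, i.e. iff \<open>w^q = w^2\<close>
  and \<open>g(w) = 0\<close>. For \<open>w \<noteq> 0\<close> the first condition says \<open>w^(q-2) = 1\<close>, and the hypothesis on
  \<open>F_(q^n)\<close> makes the second one automatic; as \<open>q - 2\<close> is prime to \<open>p\<close>, there are
  exactly \<open>q - 2\<close> such \<open>w\<close>. Finally the Pluecker ratio \<open>p\<^sub>0\<^sub>2 / p\<^sub>0\<^sub>1 = 2t\<close> generates
  \<open>k(t)\<close>, so the Gauss map is birational.\<close>

section \<open>Binary forms\<close>

lemma poly_eq_sum_atMost:
  fixes p :: "'a::comm_semiring_1 poly"
  assumes "degree p \<le> N"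
  shows "poly p x = (\<Sum>i\<le>N. coeff p i * x ^ i)"
  unfolding poly_altdef
  by (rule sum.mono_neutral_left) (use assms in \<open>auto simp: coeff_eq_0\<close>)

lemma hform_at_1:
  assumes "degree f \<le> d"
  shows "hform d f 1 t = poly f t"
  using poly_eq_sum_atMost[OF assms] by (simp add: hform_def)

lemma hform_dt_at_1:
  assumes "degree f \<le> d"
  shows "hform_dt d f 1 t = poly (pderiv f) t"
proof (cases d)
  case 0
  then obtain c where "f = [:c:]" using assms by (metis degree_eq_zeroE le_zero_eq)
  then show ?thesis by (simp add: hform_dt_def 0)
next
  case (Suc m)
  have "degree (pderiv f) \<le> m"
    using assms Suc by (intro degree_le) (auto simp: coeff_pderiv coeff_eq_0)
  then have "poly (pderiv f) t = (\<Sum>i\<le>m. of_nat (Suc i) * coeff f (Suc i) * t ^ i)"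
    by (simp add: poly_eq_sum_atMost coeff_pderiv)
  then show ?thesis
    by (simp add: hform_dt_def Suc sum.atMost_Suc_shift del: sum.atMost_Suc)
qed

lemma hform_at_0: "hform d f 0 t = coeff f d * t ^ d"
proof -
  have "hform d f 0 t = (\<Sum>j\<le>d. if j = d then coeff f d * t ^ d else 0)"
    unfolding hform_def by (intro sum.cong) auto
  then show ?thesis by simp
qed

lemma hform_ds_at_0:
  assumes "1 \<le> d"
  shows "hform_ds d f 0 t = coeff f (d - 1) * t ^ (d - 1)"
proof -
  have "of_nat (d - j) * coeff f j * 0 ^ (d - j - 1) * t ^ j = 0" if "j \<le> d" "j \<noteq> d - 1" for j
    using that by (cases "j = d") auto
  then have "hform_ds d f 0 t = (\<Sum>j\<le>d. if j = d - 1 then coeff f (d - 1) * t ^ (d - 1) else 0)"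
    unfolding hform_ds_def using assms by (intro sum.cong) auto
  then show ?thesis using assms by simp
qed

lemma hform_scale: "hform d f (c * s) (c * t) = c ^ d * hform d f s t"
  unfolding hform_def sum_distrib_left
proof (intro sum.cong refl)
  fix j assume "j \<in> {..d}"
  then have "c ^ d = c ^ (d - j) * c ^ j" by (simp flip: power_add)
  then show "coeff f j * (c * s) ^ (d - j) * (c * t) ^ j = c ^ d * (coeff f j * s ^ (d - j) * t ^ j)"
    by (simp add: power_mult_distrib algebra_simps)
qed

lemma hform_ds_scale: "hform_ds d f (c * s) (c * t) = c ^ (d - 1) * hform_ds d f s t"
  unfolding hform_ds_def sum_distrib_left
proof (intro sum.cong refl)
  fix j assume "j \<in> {..d}"
  show "of_nat (d - j) * coeff f j * (c * s) ^ (d - j - 1) * (c * t) ^ j =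
        c ^ (d - 1) * (of_nat (d - j) * coeff f j * s ^ (d - j - 1) * t ^ j)"
  proof (cases "j = d")
    case False
    with \<open>j \<in> {..d}\<close> have "c ^ (d - 1) = c ^ (d - j - 1) * c ^ j" by (simp flip: power_add)
    then show ?thesis by (simp add: power_mult_distrib algebra_simps)
  qed simp
qed

lemma hform_dt_scale: "hform_dt d f (c * s) (c * t) = c ^ (d - 1) * hform_dt d f s t"
  unfolding hform_dt_def sum_distrib_left
proof (intro sum.cong refl)
  fix j assume "j \<in> {..d}"
  show "of_nat j * coeff f j * (c * s) ^ (d - j) * (c * t) ^ (j - 1) =
        c ^ (d - 1) * (of_nat j * coeff f j * s ^ (d - j) * t ^ (j - 1))"
  proof (cases "j = 0")
    case False
    with \<open>j \<in> {..d}\<close> have "c ^ (d - 1) = c ^ (d - j) * c ^ (j - 1)" by (simp flip: power_add)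
    then show ?thesis by (simp add: power_mult_distrib algebra_simps)
  qed simp
qed

lemma hform_ds_euler_at_1: "hform_ds d f 1 t = of_nat d * hform d f 1 t - t * hform_dt d f 1 t"
  unfolding hform_ds_def hform_def hform_dt_def sum_distrib_left sum_subtractf[symmetric]
proof (intro sum.cong refl)
  fix j assume "j \<in> {..d}"
  moreover have "t * (of_nat j * coeff f j * t ^ (j - 1)) = of_nat j * coeff f j * t ^ j"
    by (cases j) (simp_all add: algebra_simps)
  ultimately show "of_nat (d - j) * coeff f j * 1 ^ (d - j - 1) * t ^ j =
      of_nat d * (coeff f j * 1 ^ (d - j) * t ^ j) - t * (of_nat j * coeff f j * 1 ^ (d - j) * t ^ (j - 1))"
    by (simp add: of_nat_diff algebra_simps)
qed

section \<open>The curve of a list of binary forms\<close>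

definition vec_of_list :: "'a::zero list \<Rightarrow> nat \<Rightarrow> 'a" where
  "vec_of_list xs i = (if i < length xs then xs ! i else 0)"

lemma vec_of_list_nth [simp]: "i < length xs \<Longrightarrow> vec_of_list xs i = xs ! i"
  by (simp add: vec_of_list_def)

lemma vec_of_list_inject:
  assumes "length xs = length ys"
  shows "vec_of_list xs = vec_of_list ys \<longleftrightarrow> xs = ys"
proof
  assume eq: "vec_of_list xs = vec_of_list ys"
  show "xs = ys"
  proof (rule nth_equalityI)
    fix i assume "i < length xs"
    then show "xs ! i = ys ! i" using fun_cong[OF eq, of i] assms by simp
  qed (rule assms)
qed simp

lemma vec_of_list_eq_zero_iff: "vec_of_list xs = (\<lambda>_. 0) \<longleftrightarrow> (\<forall>x\<in>set xs. x = 0)"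
  by (auto simp: vec_of_list_def fun_eq_iff in_set_conv_nth) (metis nth_mem)

lemma vec_of_list_lincomb:
  fixes xs ys :: "'a::semiring_0 list"
  assumes "length xs = length ys"
  shows "(\<lambda>i. a * vec_of_list xs i + b * vec_of_list ys i) =
    vec_of_list (map2 (\<lambda>x y. a * x + b * y) xs ys)"
  using assms by (auto simp: vec_of_list_def fun_eq_iff)

lemma Fv_eq_vec_of_list: "Fv vs d s t = vec_of_list (map (\<lambda>f. hform d f s t) vs)"
  by (auto simp: Fv_def vec_of_list_def fun_eq_iff)

lemma Fs_eq_vec_of_list: "Fs vs d s t = vec_of_list (map (\<lambda>f. hform_ds d f s t) vs)"
  by (auto simp: Fs_def vec_of_list_def fun_eq_iff)

lemma Ft_eq_vec_of_list: "Ft vs d s t = vec_of_list (map (\<lambda>f. hform_dt d f s t) vs)"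
  by (auto simp: Ft_def vec_of_list_def fun_eq_iff)

lemma Fv_at_0_1: "Fv vs d 0 1 = vec_of_list (map (\<lambda>f. coeff f d) vs)"
  unfolding Fv_eq_vec_of_list by (simp add: hform_at_0)

lemma Fs_at_0_1: "1 \<le> d \<Longrightarrow> Fs vs d 0 1 = vec_of_list (map (\<lambda>f. coeff f (d - 1)) vs)"
  unfolding Fs_eq_vec_of_list by (simp add: hform_ds_at_0)

lemma Fv_scale: "Fv vs d (c * s) (c * t) = (\<lambda>i. c ^ d * Fv vs d s t i)"
  by (auto simp: Fv_def hform_scale fun_eq_iff)

lemma Fs_scale: "Fs vs d (c * s) (c * t) = (\<lambda>i. c ^ (d - 1) * Fs vs d s t i)"
  by (auto simp: Fs_def hform_ds_scale fun_eq_iff)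

lemma Ft_scale: "Ft vs d (c * s) (c * t) = (\<lambda>i. c ^ (d - 1) * Ft vs d s t i)"
  by (auto simp: Ft_def hform_dt_scale fun_eq_iff)

lemma Fs_euler_at_1: "Fs vs d 1 u = (\<lambda>i. of_nat d * Fv vs d 1 u i - u * Ft vs d 1 u i)"
  by (auto simp: Fs_def Fv_def Ft_def hform_ds_euler_at_1 fun_eq_iff)

lemma pcls_eq_iff: "pcls x = pcls y \<longleftrightarrow> (\<exists>c. c \<noteq> 0 \<and> x = (\<lambda>i. c * y i))"
proof
  assume "pcls x = pcls y"
  moreover have "x \<in> pcls x" unfolding pcls_def by (intro CollectI exI[of _ 1]) auto
  ultimately show "\<exists>c. c \<noteq> 0 \<and> x = (\<lambda>i. c * y i)" unfolding pcls_def by auto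
next
  assume "\<exists>c. c \<noteq> 0 \<and> x = (\<lambda>i. c * y i)"
  then obtain c where c: "c \<noteq> 0" "x = (\<lambda>i. c * y i)" by auto
  show "pcls x = pcls y"
  proof (intro set_eqI iffI)
    fix z assume "z \<in> pcls x"
    then obtain e where "e \<noteq> 0" "z = (\<lambda>i. e * x i)" unfolding pcls_def by auto
    then show "z \<in> pcls y" unfolding pcls_def using c by (intro CollectI exI[of _ "e * c"]) (auto simp: mult.assoc)
  next
    fix z assume "z \<in> pcls y"
    then obtain e where "e \<noteq> 0" "z = (\<lambda>i. e * y i)" unfolding pcls_def by auto
    then show "z \<in> pcls x" unfolding pcls_def using c by (intro CollectI exI[of _ "e / c"]) (auto simp: mult.assoc)
  qed
qed

lemma pcls_scale: "c \<noteq> 0 \<Longrightarrow> pcls (\<lambda>i. c * x i) = pcls x"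
  by (auto simp: pcls_eq_iff)

lemma Fv_chart: "s \<noteq> 0 \<Longrightarrow> Fv vs d s t = (\<lambda>i. s ^ d * Fv vs d 1 (t / s) i)"
  using Fv_scale[of vs d s 1 "t / s"] by simp

lemma Fs_chart: "s \<noteq> 0 \<Longrightarrow> Fs vs d s t = (\<lambda>i. s ^ (d - 1) * Fs vs d 1 (t / s) i)"
  using Fs_scale[of vs d s 1 "t / s"] by simp

lemma Ft_chart: "s \<noteq> 0 \<Longrightarrow> Ft vs d s t = (\<lambda>i. s ^ (d - 1) * Ft vs d 1 (t / s) i)"
  using Ft_scale[of vs d s 1 "t / s"] by simp

lemma pcls_Fv_chart: "s \<noteq> 0 \<Longrightarrow> pcls (Fv vs d s t) = pcls (Fv vs d 1 (t / s))"
  by (subst Fv_chart) (simp_all add: pcls_scale)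

lemma pcls_Fv_infinity: "t \<noteq> 0 \<Longrightarrow> pcls (Fv vs d 0 t) = pcls (Fv vs d 0 1)"
  using Fv_scale[of vs d t 0 1] by (simp add: pcls_scale)

lemma pcls_Fv_cases:
  assumes "(s, t) \<noteq> (0, 0)"
  obtains "s \<noteq> 0" "pcls (Fv vs d s t) = pcls (Fv vs d 1 (t / s))"
    | "s = 0" "t \<noteq> 0" "pcls (Fv vs d s t) = pcls (Fv vs d 0 1)"
  using assms pcls_Fv_chart[of s vs d t] pcls_Fv_infinity[of t vs d] by (cases "s = 0") auto

lemma curve_img_eq: "curve_img vs d = range (\<lambda>u. pcls (Fv vs d 1 u)) \<union> {pcls (Fv vs d 0 1)}"
proof (intro equalityI subsetI)
  fix X assume "X \<in> curve_img vs d"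
  then obtain s t where "(s, t) \<noteq> (0, 0)" "X = pcls (Fv vs d s t)"
    unfolding curve_img_def by blast
  then show "X \<in> range (\<lambda>u. pcls (Fv vs d 1 u)) \<union> {pcls (Fv vs d 0 1)}"
    using pcls_Fv_chart[of s vs d t] pcls_Fv_infinity[of t vs d] by (cases "s = 0") auto
next
  fix X assume "X \<in> range (\<lambda>u. pcls (Fv vs d 1 u)) \<union> {pcls (Fv vs d 0 1)}"
  then consider u where "X = pcls (Fv vs d 1 u)" | "X = pcls (Fv vs d 0 1)" by blast
  then show "X \<in> curve_img vs d"
  proof cases
    case 1
    then show ?thesis unfolding curve_img_def by (intro CollectI exI[of _ 1] exI[of _ u]) simp
  next
    case 2
    then show ?thesis unfolding curve_img_def by (intro CollectI exI[of _ 0] exI[of _ 1]) simp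
  qed
qed

text \<open>Euler's identity \<open>s F\<^sub>s + t F\<^sub>t = d F\<close> removes \<open>F\<^sub>s\<close> from the span.\<close>
lemma tline_chart:
  fixes vs :: "'k::field poly list" and d :: nat and s t :: 'k
  assumes s: "s \<noteq> 0"
  defines "V \<equiv> Fv vs d 1 (t / s)" and "D \<equiv> Ft vs d 1 (t / s)"
  shows "tline vs d s t =
    {pcls w | w. w \<noteq> (\<lambda>_. 0) \<and> (\<exists>a b. w = (\<lambda>i. a * V i + b * D i))}"
proof -
  have "(\<exists>a b c. w = (\<lambda>i. a * Fv vs d s t i + b * Fs vs d s t i + c * Ft vs d s t i)) \<longleftrightarrow>
    (\<exists>a b. w = (\<lambda>i. a * V i + b * D i))" for w
  proof
    assume "\<exists>a b c. w = (\<lambda>i. a * Fv vs d s t i + b * Fs vs d s t i + c * Ft vs d s t i)"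
    then obtain a b c where "w = (\<lambda>i. a * Fv vs d s t i + b * Fs vs d s t i + c * Ft vs d s t i)"
      by blast
    moreover have "Fv vs d s t = (\<lambda>i. s ^ d * V i)" "Ft vs d s t = (\<lambda>i. s ^ (d - 1) * D i)"
      "Fs vs d s t = (\<lambda>i. s ^ (d - 1) * (of_nat d * V i - t / s * D i))"
      unfolding V_def D_def Fv_chart[OF s] Ft_chart[OF s] Fs_chart[OF s] Fs_euler_at_1
      by simp_all
    ultimately have "w = (\<lambda>i. (a * s ^ d + b * s ^ (d - 1) * of_nat d) * V i
        + (c - b * (t / s)) * s ^ (d - 1) * D i)"
      by (simp add: fun_eq_iff algebra_simps)
    then show "\<exists>a b. w = (\<lambda>i. a * V i + b * D i)" by blast
  next
    assume "\<exists>a b. w = (\<lambda>i. a * V i + b * D i)"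
    then obtain a b where "w = (\<lambda>i. a * V i + b * D i)" by blast
    then have "w = (\<lambda>i. (a / s ^ d) * Fv vs d s t i + 0 * Fs vs d s t i + (b / s ^ (d - 1)) * Ft vs d s t i)"
      using s unfolding V_def D_def Fv_chart[OF s] Ft_chart[OF s] by simp
    then show "\<exists>a b c. w = (\<lambda>i. a * Fv vs d s t i + b * Fs vs d s t i + c * Ft vs d s t i)" by blast
  qed
  then show ?thesis unfolding tline_def by simp
qed

lemma gen_field_const: "to_fract [:c:] \<in> gen_field S"
  unfolding gen_field_def by blast

lemma gen_field_base: "x \<in> S \<Longrightarrow> x \<in> gen_field S"
  unfolding gen_field_def by blast

lemma gen_field_add: "x \<in> gen_field S \<Longrightarrow> y \<in> gen_field S \<Longrightarrow> x + y \<in> gen_field S"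
  unfolding gen_field_def by blast

lemma gen_field_mult: "x \<in> gen_field S \<Longrightarrow> y \<in> gen_field S \<Longrightarrow> x * y \<in> gen_field S"
  unfolding gen_field_def by blast

section \<open>Curves of the form \<open>(1 : t : \<dots>)\<close>\<close>

locale affine_curve =
  fixes vs :: "'k::field poly list" and d :: nat
  assumes two_le_length: "2 \<le> length vs"
    and nth_0: "vs ! 0 = 1" and nth_1: "vs ! 1 = [:0, 1:]"
    and degree_le: "\<And>f. f \<in> set vs \<Longrightarrow> degree f \<le> d"
begin

lemma length_gt: "0 < length vs" "1 < length vs"
  using two_le_length by linarith+

lemma one_le_d: "1 \<le> d"
  using degree_le[OF nth_mem[OF length_gt(2)]] unfolding nth_1 by simp

lemma Fv_affine: "Fv vs d 1 u = vec_of_list (map (\<lambda>f. poly f u) vs)"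
  unfolding Fv_eq_vec_of_list using degree_le by (simp add: hform_at_1 cong: map_cong)

lemma Ft_affine: "Ft vs d 1 u = vec_of_list (map (\<lambda>f. poly (pderiv f) u) vs)"
  unfolding Ft_eq_vec_of_list using degree_le by (simp add: hform_dt_at_1 cong: map_cong)

lemma affine_coords:
  "Fv vs d 1 u 0 = 1" "Fv vs d 1 u 1 = u" "Ft vs d 1 u 0 = 0" "Ft vs d 1 u 1 = 1"
  using length_gt by (simp_all add: Fv_affine Ft_affine nth_0 nth_1 pderiv_pCons del: One_nat_def)

lemma infinity_coord_0: "Fv vs d 0 1 0 = 0"
  using length_gt one_le_d by (simp add: Fv_at_0_1 nth_0)

lemma pcls_affine_eq_iff: "pcls (Fv vs d 1 u) = pcls (Fv vs d 1 u') \<longleftrightarrow> u = u'"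
proof
  assume "pcls (Fv vs d 1 u) = pcls (Fv vs d 1 u')"
  then obtain c where "Fv vs d 1 u = (\<lambda>i. c * Fv vs d 1 u' i)" by (auto simp: pcls_eq_iff)
  from fun_cong[OF this, of 0] fun_cong[OF this, of 1] show "u = u'"
    by (simp add: affine_coords del: One_nat_def)
qed simp

lemma pcls_affine_ne_infinity: "pcls (Fv vs d 1 u) \<noteq> pcls (Fv vs d 0 1)"
proof
  assume "pcls (Fv vs d 1 u) = pcls (Fv vs d 0 1)"
  then obtain c where "Fv vs d 1 u = (\<lambda>i. c * Fv vs d 0 1 i)" by (auto simp: pcls_eq_iff)
  from fun_cong[OF this, of 0] show False by (simp add: affine_coords infinity_coord_0)
qed


lemma Fv_nonzero:
  assumes "Fv vs d 0 1 \<noteq> (\<lambda>_. 0)" and "(s, t) \<noteq> (0, 0)"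
  shows "Fv vs d s t \<noteq> (\<lambda>_. 0)"
proof (cases "s = 0")
  case True
  then show ?thesis
    using assms Fv_scale[of vs d t 0 1] by (auto simp: fun_eq_iff)
next
  case False
  show ?thesis
  proof
    assume "Fv vs d s t = (\<lambda>_. 0)"
    from fun_cong[OF this[unfolded Fv_chart[OF False]], of 0] False show False
      by (simp add: affine_coords)
  qed
qed

lemma pcls_Fv_eq_imp_proportional:
  assumes st: "(s, t) \<noteq> (0, 0)" and st': "(s', t') \<noteq> (0, 0)"
    and eq: "pcls (Fv vs d s t) = pcls (Fv vs d s' t')"
  shows "\<exists>c. c \<noteq> 0 \<and> s' = c * s \<and> t' = c * t"
proof (cases rule: pcls_Fv_cases[OF st, where vs = vs and d = d];
    cases rule: pcls_Fv_cases[OF st', where vs = vs and d = d])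
  assume "s \<noteq> 0" "s' \<noteq> 0" "pcls (Fv vs d s t) = pcls (Fv vs d 1 (t / s))"
    "pcls (Fv vs d s' t') = pcls (Fv vs d 1 (t' / s'))"
  with eq have "t / s = t' / s'" by (simp add: pcls_affine_eq_iff)
  with \<open>s \<noteq> 0\<close> \<open>s' \<noteq> 0\<close> show ?thesis
    by (intro exI[of _ "s' / s"]) (auto simp: field_simps)
next
  assume "s = 0" "t \<noteq> 0" "s' = 0" "t' \<noteq> 0"
  then show ?thesis by (intro exI[of _ "t' / t"]) auto
qed (metis eq pcls_affine_ne_infinity)+

lemma differential_nonzero:
  assumes Fs_infinity: "\<not> (\<exists>c. Fs vs d 0 1 = (\<lambda>i. c * Fv vs d 0 1 i))"
    and st: "(s, t) \<noteq> (0, 0)"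
  shows "\<exists>a b. \<not> (\<exists>c. (\<lambda>i. a * Fs vs d s t i + b * Ft vs d s t i) = (\<lambda>i. c * Fv vs d s t i))"
proof (cases "s = 0")
  case True
  have "\<not> (\<exists>c. Fs vs d 0 t = (\<lambda>i. c * Fv vs d 0 t i))"
  proof
    assume "\<exists>c. Fs vs d 0 t = (\<lambda>i. c * Fv vs d 0 t i)"
    then obtain c where "(\<lambda>i. t ^ (d - 1) * Fs vs d 0 1 i) = (\<lambda>i. c * (t ^ d * Fv vs d 0 1 i))"
      using Fs_scale[of vs d t 0 1] Fv_scale[of vs d t 0 1] by auto
    moreover have "t ^ d = t ^ (d - 1) * t" "t \<noteq> 0"
      using st True one_le_d by (auto simp flip: power_Suc2)
    ultimately have "Fs vs d 0 1 = (\<lambda>i. (c * t) * Fv vs d 0 1 i)"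
      by (auto simp: fun_eq_iff)
    then show False using Fs_infinity by blast
  qed
  then show ?thesis using True by (intro exI[of _ 1] exI[of _ 0]) simp
next
  case False
  have "\<not> (\<exists>c. Ft vs d s t = (\<lambda>i. c * Fv vs d s t i))"
  proof
    assume "\<exists>c. Ft vs d s t = (\<lambda>i. c * Fv vs d s t i)"
    then obtain c where "Ft vs d s t = (\<lambda>i. c * Fv vs d s t i)" by blast
    note c = this[unfolded Fv_chart[OF False] Ft_chart[OF False]]
    from fun_cong[OF c, of 0] have "c = 0"
      using False by (simp add: affine_coords)
    with fun_cong[OF c, of 1] False show False
      by (simp add: affine_coords del: One_nat_def)
  qed
  then show ?thesis by (intro exI[of _ 0] exI[of _ 1]) simp
qed

lemma is_embedding_if_infinity:
  assumes "Fv vs d 0 1 \<noteq> (\<lambda>_. 0)"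
    and "\<not> (\<exists>c. Fs vs d 0 1 = (\<lambda>i. c * Fv vs d 0 1 i))"
  shows "is_embedding vs d"
  unfolding is_embedding_def
  using Fv_nonzero[OF assms(1)] pcls_Fv_eq_imp_proportional differential_nonzero[OF assms(2)]
  by blast

lemma pcls_affine_in_tline_iff:
  fixes s t :: 'k
  assumes s: "s \<noteq> 0"
  defines "u\<^sub>0 \<equiv> t / s"
  shows "pcls (Fv vs d 1 u) \<in> tline vs d s t \<longleftrightarrow>
    Fv vs d 1 u = (\<lambda>i. Fv vs d 1 u\<^sub>0 i + (u - u\<^sub>0) * Ft vs d 1 u\<^sub>0 i)"
proof
  assume "pcls (Fv vs d 1 u) \<in> tline vs d s t"
  then obtain a b where "pcls (Fv vs d 1 u) = pcls (\<lambda>i. a * Fv vs d 1 u\<^sub>0 i + b * Ft vs d 1 u\<^sub>0 i)"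
    unfolding tline_chart[OF s] u\<^sub>0_def by blast
  then obtain c where c: "Fv vs d 1 u = (\<lambda>i. c * (a * Fv vs d 1 u\<^sub>0 i + b * Ft vs d 1 u\<^sub>0 i))"
    by (auto simp: pcls_eq_iff)
  from fun_cong[OF c, of 0] fun_cong[OF c, of 1] have "c * a = 1" "c * b = u - u\<^sub>0"
    by (simp_all add: affine_coords algebra_simps del: One_nat_def)
  moreover have "Fv vs d 1 u = (\<lambda>i. (c * a) * Fv vs d 1 u\<^sub>0 i + (c * b) * Ft vs d 1 u\<^sub>0 i)"
    using c by (simp add: algebra_simps)
  ultimately show "Fv vs d 1 u = (\<lambda>i. Fv vs d 1 u\<^sub>0 i + (u - u\<^sub>0) * Ft vs d 1 u\<^sub>0 i)"
    by simp
next
  assume "Fv vs d 1 u = (\<lambda>i. Fv vs d 1 u\<^sub>0 i + (u - u\<^sub>0) * Ft vs d 1 u\<^sub>0 i)"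
  then have "Fv vs d 1 u = (\<lambda>i. 1 * Fv vs d 1 u\<^sub>0 i + (u - u\<^sub>0) * Ft vs d 1 u\<^sub>0 i)" by simp
  moreover have "Fv vs d 1 u \<noteq> (\<lambda>_. 0)"
    by (metis affine_coords(1) one_neq_zero)
  ultimately show "pcls (Fv vs d 1 u) \<in> tline vs d s t"
    unfolding tline_chart[OF s] u\<^sub>0_def by blast
qed

lemma infinity_notin_tline:
  assumes s: "s \<noteq> 0" and "2 \<le> d"
  shows "pcls (Fv vs d 0 1) \<notin> tline vs d s t"
proof
  assume "pcls (Fv vs d 0 1) \<in> tline vs d s t"
  then obtain w a b where w: "w \<noteq> (\<lambda>_. 0)" "w = (\<lambda>i. a * Fv vs d 1 (t / s) i + b * Ft vs d 1 (t / s) i)"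
    and "pcls (Fv vs d 0 1) = pcls w"
    unfolding tline_chart[OF s] by blast
  then obtain c where "c \<noteq> 0" and c: "Fv vs d 0 1 = (\<lambda>i. c * w i)" by (auto simp: pcls_eq_iff)
  have "Fv vs d 0 1 1 = 0"
    using length_gt \<open>2 \<le> d\<close> by (simp add: Fv_at_0_1 nth_1 coeff_eq_0 del: One_nat_def)
  with fun_cong[OF c, of 0] fun_cong[OF c, of 1] w(2) \<open>c \<noteq> 0\<close> have "a = 0" "b = 0"
    by (simp_all add: affine_coords infinity_coord_0 del: One_nat_def)
  with w show False by simp
qed

lemma tline_residual_inter_curve:
  assumes s: "s \<noteq> 0" and "2 \<le> d"
  shows "(tline vs d s t - {pcls (Fv vs d s t)}) \<inter> curve_img vs d =
    (\<lambda>u. pcls (Fv vs d 1 u)) ` {u. u \<noteq> t / s \<and>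
      Fv vs d 1 u = (\<lambda>i. Fv vs d 1 (t / s) i + (u - t / s) * Ft vs d 1 (t / s) i)}"
    (is "_ = _ ` ?R")
proof -
  have residual_in_image: "X \<in> (\<lambda>u. pcls (Fv vs d 1 u)) ` ?R"
    if "X \<in> tline vs d s t" "X \<noteq> pcls (Fv vs d 1 (t / s))" "X \<in> curve_img vs d" for X
  proof -
    from that(1,3) obtain u where X: "X = pcls (Fv vs d 1 u)"
      using infinity_notin_tline[OF assms] unfolding curve_img_eq by blast
    have "Fv vs d 1 u = (\<lambda>i. Fv vs d 1 (t / s) i + (u - t / s) * Ft vs d 1 (t / s) i)"
      using that(1) pcls_affine_in_tline_iff[OF s, where t = t and u = u] unfolding X by blast
    moreover have "u \<noteq> t / s" using that(2) unfolding X by blast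
    ultimately show ?thesis unfolding X by (intro imageI CollectI conjI)
  qed
  have image_in_residual: "pcls (Fv vs d 1 u) \<in> tline vs d s t"
    "pcls (Fv vs d 1 u) \<noteq> pcls (Fv vs d 1 (t / s))" "pcls (Fv vs d 1 u) \<in> curve_img vs d"
    if "u \<in> ?R" for u
  proof -
    from that have "u \<noteq> t / s"
      and eq: "Fv vs d 1 u = (\<lambda>i. Fv vs d 1 (t / s) i + (u - t / s) * Ft vs d 1 (t / s) i)"
      by auto
    show "pcls (Fv vs d 1 u) \<in> tline vs d s t"
      using pcls_affine_in_tline_iff[OF s, where t = t and u = u] eq by blast
    show "pcls (Fv vs d 1 u) \<noteq> pcls (Fv vs d 1 (t / s))"
      using \<open>u \<noteq> t / s\<close> by (simp add: pcls_affine_eq_iff)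
    show "pcls (Fv vs d 1 u) \<in> curve_img vs d" unfolding curve_img_eq by blast
  qed
  show ?thesis
    unfolding pcls_Fv_chart[OF s]
  proof (intro equalityI subsetI)
    fix X assume "X \<in> (tline vs d s t - {pcls (Fv vs d 1 (t / s))}) \<inter> curve_img vs d"
    then show "X \<in> (\<lambda>u. pcls (Fv vs d 1 u)) ` ?R" by (intro residual_in_image) simp_all
  next
    fix X assume "X \<in> (\<lambda>u. pcls (Fv vs d 1 u)) ` ?R"
    then obtain u where "u \<in> ?R" "X = pcls (Fv vs d 1 u)" by blast
    then show "X \<in> (tline vs d s t - {pcls (Fv vs d 1 (t / s))}) \<inter> curve_img vs d"
      using image_in_residual by simp
  qed
qed

lemma gauss_birational_if_pderiv_linear:
  assumes "2 < length vs" and "pderiv (vs ! 2) = [:b, c:]" and "c \<noteq> 0"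
  shows "gauss_birational vs"
proof -
  have pl_0_1: "pl vs 0 1 = 1"
    by (simp add: pl_def nth_0 nth_1 pderiv_pCons del: One_nat_def)
  have pl_0_2: "pl vs 0 2 = [:b, c:]"
    using assms(2) by (simp add: pl_def nth_0)
  have ratio: "to_fract [:b, c:] \<in> gauss_ratios vs"
    unfolding gauss_ratios_def using assms(1) pl_0_1 pl_0_2
    by (intro CollectI exI[of _ 0] exI[of _ 2] exI[of _ 0] exI[of _ 1]) simp
  have "[:0, 1:] = [:1 / c:] * [:b, c:] + [:- b / c:]"
    using assms(3) by (simp add: field_simps)
  then have "to_fract [:0, 1:] = to_fract [:1 / c:] * to_fract [:b, c:] + to_fract [:- b / c:]"
    by (metis to_fract_add to_fract_mult)
  also have "\<dots> \<in> gen_field (gauss_ratios vs)"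
    by (intro gen_field_add gen_field_mult gen_field_const gen_field_base ratio)
  finally show ?thesis
    unfolding gauss_birational_def using assms(1) pl_0_1 by (intro conjI exI[of _ 0] exI[of _ 1]) simp_all
qed

end

section \<open>Roots of separable polynomials\<close>

lemma proots_prod_linear_factors: "proots (\<Prod>x\<in>#A. [:- x, 1:]) = A"
proof (induction A)
  case (add x A)
  have "proots [:- x, 1:] = {#x#}"
    using proots_linear_factor[of "- x"] by simp
  moreover have "(\<Prod>y\<in>#A. [:- y, 1:]) \<noteq> 0"
    by (auto simp: prod_mset_zero_iff)
  ultimately show ?case
    using add.IH by (simp add: proots_mult del: mult_pCons_left)
qed simp

lemma size_proots_alg_closed: "size (proots p) = degree (p :: 'a::alg_closed_field poly)"
proof (cases "p = 0")
  case False
  then obtain A where "size A = degree p" "p = smult (lead_coeff p) (\<Prod>x\<in>#A. [:- x, 1:])"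
    using alg_closed_imp_factorization by blast
  with False show ?thesis
    by (metis leading_coeff_0_iff proots_prod_linear_factors proots_smult)
qed simp

lemma order_le_1_if_pderiv_nonzero:
  assumes "poly (pderiv p) x \<noteq> 0"
  shows "order x p \<le> 1"
proof (rule ccontr)
  assume "\<not> order x p \<le> 1"
  then have "[:- x, 1:] ^ 2 dvd [:- x, 1:] ^ order x p"
    by (intro le_imp_power_dvd) simp
  then have "[:- x, 1:] ^ 2 dvd p"
    using order_1 dvd_trans by blast
  then obtain r where "p = [:- x, 1:] ^ 2 * r" by (elim dvdE)
  then have "poly (pderiv p) x = 0" by (simp add: pderiv_mult pderiv_power)
  with assms show False by contradiction
qed

lemma card_roots_eq_degree_if_separable:
  fixes p :: "'a::alg_closed_field poly"
  assumes "p \<noteq> 0" and separable: "\<And>x. poly p x = 0 \<Longrightarrow> poly (pderiv p) x \<noteq> 0"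
  shows "card {x. poly p x = 0} = degree p"
proof -
  have "proots p = mset_set {x. poly p x = 0}"
  proof (rule multiset_eqI)
    fix x
    show "count (proots p) x = count (mset_set {x. poly p x = 0}) x"
      using assms order_le_1_if_pderiv_nonzero[of p x] order_gt_0_iff[of p x]
      by (cases "poly p x = 0") (simp_all add: poly_roots_finite order_eq_0_iff)
  qed
  then show ?thesis by (metis size_mset_set size_proots_alg_closed)
qed

lemma card_roots_of_unity:
  assumes "0 < m" and "of_nat m \<noteq> (0 :: 'a::alg_closed_field)"
  shows "card {w :: 'a. w ^ m = 1} = m"
proof -
  define p :: "'a poly" where "p = monom 1 m - 1"
  have degree_p: "degree p = m"
  proof -
    have "p = monom 1 m + (- 1)" by (simp add: p_def)
    also have "degree \<dots> = m" using assms(1) by (subst degree_add_eq_left) (simp_all add: degree_monom_eq)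
    finally show ?thesis .
  qed
  have roots: "{w. w ^ m = 1} = {w. poly p w = 0}"
    by (simp add: p_def poly_monom)
  have "poly (pderiv p) w \<noteq> 0" if "poly p w = 0" for w
  proof -
    from that have "w \<noteq> 0" using assms(1) by (auto simp: p_def poly_monom power_0_left)
    then show ?thesis using assms(2) by (simp add: p_def pderiv_diff pderiv_monom poly_monom)
  qed
  then show ?thesis
    unfolding roots using degree_p assms(1)
    by (subst card_roots_eq_degree_if_separable) auto
qed

lemma additive_power_pow:
  fixes x y :: "'a::comm_semiring_1"
  assumes "\<And>x y :: 'a. (x + y) ^ q = x ^ q + y ^ q"
  shows "(x + y) ^ (q ^ k) = x ^ (q ^ k) + y ^ (q ^ k)"
proof (induction k arbitrary: x y)
  case (Suc k)
  then show ?case by (simp add: power_mult assms)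
qed simp

lemma power_eq_power_iff_power_diff_eq_1:
  fixes w :: "'a::field"
  assumes "n < m"
  shows "w \<noteq> 0 \<and> w ^ m = w ^ n \<longleftrightarrow> w ^ (m - n) = 1"
proof -
  have m: "w ^ m = w ^ (m - n) * w ^ n"
    using assms by (simp flip: power_add)
  show ?thesis
  proof
    assume "w \<noteq> 0 \<and> w ^ m = w ^ n"
    then show "w ^ (m - n) = 1" using m by (metis mult_cancel_right1 power_eq_0_iff)
  next
    assume "w ^ (m - n) = 1"
    moreover from this assms have "w \<noteq> 0" by (auto simp: power_0_left)
    ultimately show "w \<noteq> 0 \<and> w ^ m = w ^ n" using m by simp
  qed
qed

section \<open>The curve \<open>\<phi>\<close>\<close>

lemma phi_polys_eq_monom: "phi_polys q n = [monom 1 0, monom 1 1, monom 1 2 - monom 1 q,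
   monom 1 (q ^ n) - monom 1 (q ^ (2 * n)), monom 1 (q ^ n + 1) - monom 1 (q ^ (2 * n) + 1)]"
  by (simp add: phi_polys_def Let_def monom_altdef algebra_simps)

lemma phi_exponents:
  fixes q n :: nat
  assumes "2 \<le> q" and "1 \<le> n"
  shows "q \<le> q ^ n" and "q ^ n + 1 < q ^ (2 * n)"
proof -
  show "q \<le> q ^ n" using assms by (simp add: self_le_power)
  have "q ^ n * 2 \<le> q ^ n * q ^ n"
    using assms \<open>q \<le> q ^ n\<close> by (intro mult_le_mono2) linarith
  moreover have "q ^ (2 * n) = q ^ n * q ^ n" by (simp add: mult_2 power_add)
  ultimately show "q ^ n + 1 < q ^ (2 * n)"
    using assms \<open>q \<le> q ^ n\<close> by linarith
qed

lemma affine_curve_phi: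
  assumes "2 \<le> q" and "1 \<le> n"
  shows "affine_curve (phi_polys q n :: 'k::field poly list) (phi_deg q n)"
proof
  fix f :: "'k poly" assume "f \<in> set (phi_polys q n)"
  with phi_exponents[OF assms] show "degree f \<le> phi_deg q n"
    by (auto simp: phi_polys_eq_monom phi_deg_def intro!: degree_diff_le order.trans[OF degree_monom_le])
qed (simp_all add: phi_polys_def Let_def)

lemma Fv_phi_affine:
  assumes "2 \<le> q" and "1 \<le> n"
  shows "Fv (phi_polys q n) (phi_deg q n) 1 u = vec_of_list [1, u, u ^ 2 - u ^ q,
    u ^ q ^ n - u ^ q ^ (2 * n), u * (u ^ q ^ n - u ^ q ^ (2 * n))]"
  unfolding affine_curve.Fv_affine[OF affine_curve_phi[OF assms]]
  unfolding phi_polys_eq_monom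
  by (simp add: poly_monom right_diff_distrib)

lemma Ft_phi_affine:
  assumes "2 \<le> q" and "1 \<le> n" and "of_nat q = (0 :: 'k::field)"
  shows "Ft (phi_polys q n) (phi_deg q n) 1 (u :: 'k) = vec_of_list [0, 1, 2 * u, 0,
    u ^ q ^ n - u ^ q ^ (2 * n)]"
  using assms(2,3)
  unfolding affine_curve.Ft_affine[OF affine_curve_phi[OF assms(1,2)]]
  unfolding phi_polys_eq_monom
  by (simp add: pderiv_diff pderiv_monom poly_monom power_0_left)

lemma phi_at_infinity:
  assumes "2 \<le> q" and "1 \<le> n"
  shows "Fv (phi_polys q n) (phi_deg q n) 0 1 = vec_of_list [0, 0, 0, 0, - 1 :: 'k::field]"
    and "Fs (phi_polys q n) (phi_deg q n) 0 1 = vec_of_list [0, 0, 0, - 1, 0 :: 'k]"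
  using assms phi_exponents[OF assms]
  by (simp_all add: Fv_at_0_1 Fs_at_0_1 phi_polys_eq_monom phi_deg_def coeff_monom)

lemma phi_tangent_condition:
  fixes u w :: "'k::field"
  assumes "2 \<le> q" and "1 \<le> n" and "of_nat q = (0 :: 'k)"
    and frob: "\<And>x y :: 'k. (x + y) ^ q = x ^ q + y ^ q"
  shows "Fv (phi_polys q n) (phi_deg q n) 1 (u + w) =
      (\<lambda>i. Fv (phi_polys q n) (phi_deg q n) 1 u i + w * Ft (phi_polys q n) (phi_deg q n) 1 u i)
    \<longleftrightarrow> w ^ q = w ^ 2 \<and> w ^ q ^ (2 * n) = w ^ q ^ n"
proof -
  define g :: "'k \<Rightarrow> 'k" where "g x = x ^ q ^ n - x ^ q ^ (2 * n)" for x
  define h :: "'k \<Rightarrow> 'k" where "h x = x ^ 2 - x ^ q" for x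
  have g_add: "g (u + w) = g u + g w"
    unfolding g_def additive_power_pow[OF frob] by simp
  have h_add: "h (u + w) = h u + 2 * u * w + h w"
    unfolding h_def frob by (simp add: power2_eq_square algebra_simps)
  have V: "Fv (phi_polys q n) (phi_deg q n) 1 x = vec_of_list [1, x, h x, g x, x * g x]" for x
    unfolding g_def h_def by (rule Fv_phi_affine[OF assms(1,2)])
  have D: "Ft (phi_polys q n) (phi_deg q n) 1 x = vec_of_list [0, 1, 2 * x, 0, g x]" for x
    unfolding g_def by (rule Ft_phi_affine[OF assms(1-3)])
  have "Fv (phi_polys q n) (phi_deg q n) 1 (u + w) =
      vec_of_list [1, u + w, h u + 2 * u * w + h w, g u + g w, (u + w) * (g u + g w)]"
    unfolding V h_add g_add ..
  moreover have "(\<lambda>i. Fv (phi_polys q n) (phi_deg q n) 1 u i + w * Ft (phi_polys q n) (phi_deg q n) 1 u i) =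
      vec_of_list [1, u + w, h u + 2 * u * w, g u, (u + w) * g u]"
    using vec_of_list_lincomb[of "[1, u, h u, g u, u * g u]" "[0, 1, 2 * u, 0, g u]" 1 w]
    unfolding V D by (simp add: algebra_simps)
  ultimately have "Fv (phi_polys q n) (phi_deg q n) 1 (u + w) =
      (\<lambda>i. Fv (phi_polys q n) (phi_deg q n) 1 u i + w * Ft (phi_polys q n) (phi_deg q n) 1 u i)
    \<longleftrightarrow> h w = 0 \<and> g w = 0"
    by (auto simp: vec_of_list_inject)
  then show ?thesis by (auto simp: g_def h_def)
qed

lemma phi_tangent_residual_params:
  fixes u\<^sub>0 :: "'k::field"
  assumes "3 \<le> q" and "1 \<le> n" and "of_nat q = (0 :: 'k)"
    and frob: "\<And>x y :: 'k. (x + y) ^ q = x ^ q + y ^ q"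
    and fixed: "\<And>w :: 'k. w ^ (q - 2) = 1 \<Longrightarrow> w ^ q ^ n = w"
  shows "{u. u \<noteq> u\<^sub>0 \<and> Fv (phi_polys q n) (phi_deg q n) 1 u =
      (\<lambda>i. Fv (phi_polys q n) (phi_deg q n) 1 u\<^sub>0 i + (u - u\<^sub>0) * Ft (phi_polys q n) (phi_deg q n) 1 u\<^sub>0 i)}
    = (+) u\<^sub>0 ` {w. w ^ (q - 2) = 1}"
proof -
  have "w \<noteq> 0 \<and> w ^ q = w ^ 2 \<and> w ^ q ^ (2 * n) = w ^ q ^ n \<longleftrightarrow> w ^ (q - 2) = 1" for w :: 'k
  proof
    assume "w \<noteq> 0 \<and> w ^ q = w ^ 2 \<and> w ^ q ^ (2 * n) = w ^ q ^ n"
    then show "w ^ (q - 2) = 1"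
      using power_eq_power_iff_power_diff_eq_1[of 2 q w] assms(1) by simp
  next
    assume w: "w ^ (q - 2) = 1"
    have "w ^ q ^ (2 * n) = (w ^ q ^ n) ^ q ^ n"
      by (simp add: mult_2 power_add power_mult)
    with w fixed[OF w] show "w \<noteq> 0 \<and> w ^ q = w ^ 2 \<and> w ^ q ^ (2 * n) = w ^ q ^ n"
      using power_eq_power_iff_power_diff_eq_1[of 2 q w] assms(1) by simp
  qed
  moreover have "2 \<le> q" using assms(1) by simp
  ultimately have param: "w \<noteq> 0 \<and> Fv (phi_polys q n) (phi_deg q n) 1 (u\<^sub>0 + w) =
      (\<lambda>i. Fv (phi_polys q n) (phi_deg q n) 1 u\<^sub>0 i + w * Ft (phi_polys q n) (phi_deg q n) 1 u\<^sub>0 i)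
    \<longleftrightarrow> w ^ (q - 2) = 1" for w
    by (simp only: phi_tangent_condition[OF _ assms(2,3) frob])
  show ?thesis
  proof (intro set_eqI iffI)
    fix u assume "u \<in> {u. u \<noteq> u\<^sub>0 \<and> Fv (phi_polys q n) (phi_deg q n) 1 u =
      (\<lambda>i. Fv (phi_polys q n) (phi_deg q n) 1 u\<^sub>0 i + (u - u\<^sub>0) * Ft (phi_polys q n) (phi_deg q n) 1 u\<^sub>0 i)}"
    then have "(u - u\<^sub>0) ^ (q - 2) = 1"
      using param[of "u - u\<^sub>0"] by simp
    then show "u \<in> (+) u\<^sub>0 ` {w. w ^ (q - 2) = 1}"
      by (intro image_eqI[of _ _ "u - u\<^sub>0"]) simp_all
  next
    fix u assume "u \<in> (+) u\<^sub>0 ` {w. w ^ (q - 2) = 1}"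
    then obtain w where "u = u\<^sub>0 + w" "w ^ (q - 2) = 1" by blast
    then show "u \<in> {u. u \<noteq> u\<^sub>0 \<and> Fv (phi_polys q n) (phi_deg q n) 1 u =
      (\<lambda>i. Fv (phi_polys q n) (phi_deg q n) 1 u\<^sub>0 i + (u - u\<^sub>0) * Ft (phi_polys q n) (phi_deg q n) 1 u\<^sub>0 i)}"
      using param[of w] by simp
  qed
qed

lemma is_embedding_phi:
  assumes "2 \<le> q" and "1 \<le> n"
  shows "is_embedding (phi_polys q n :: 'k::field poly list) (phi_deg q n)"
proof (rule affine_curve.is_embedding_if_infinity[OF affine_curve_phi[OF assms]])
  show "Fv (phi_polys q n) (phi_deg q n) 0 1 \<noteq> (\<lambda>_. 0 :: 'k)"
    by (simp add: phi_at_infinity[OF assms] vec_of_list_eq_zero_iff)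
  show "\<not> (\<exists>c. Fs (phi_polys q n) (phi_deg q n) 0 1 = (\<lambda>i. c * Fv (phi_polys q n) (phi_deg q n) 0 1 i :: 'k))"
  proof
    assume "\<exists>c. Fs (phi_polys q n) (phi_deg q n) 0 1 = (\<lambda>i. c * Fv (phi_polys q n) (phi_deg q n) 0 1 i :: 'k)"
    then obtain c :: 'k where "Fs (phi_polys q n) (phi_deg q n) 0 1 = (\<lambda>i. c * Fv (phi_polys q n) (phi_deg q n) 0 1 i)"
      by blast
    from fun_cong[OF this, of 3] show False by (simp add: phi_at_infinity[OF assms])
  qed
qed

lemma gauss_birational_phi:
  assumes "2 \<le> q" and "1 \<le> n" and "of_nat q = (0 :: 'k::field)" and "(2 :: 'k) \<noteq> 0"
  shows "gauss_birational (phi_polys q n :: 'k poly list)"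
proof (rule affine_curve.gauss_birational_if_pderiv_linear[OF affine_curve_phi[OF assms(1,2)]])
  show "pderiv (phi_polys q n ! 2) = [:0, 2 :: 'k:]"
    using assms(3)
    by (simp add: phi_polys_eq_monom pderiv_diff pderiv_monom monom_Suc numeral_2_eq_2
        pderiv_pCons numeral_poly)
qed (use assms(4) in \<open>simp_all add: phi_polys_def Let_def\<close>)

lemma card_phi_tangent_residual:
  fixes s t :: "'k::alg_closed_field"
  assumes "3 \<le> q" and "1 \<le> n" and "of_nat q = (0 :: 'k)" and "of_nat (q - 2) \<noteq> (0 :: 'k)"
    and frob: "\<And>x y :: 'k. (x + y) ^ q = x ^ q + y ^ q"
    and fixed: "\<And>w :: 'k. w ^ (q - 2) = 1 \<Longrightarrow> w ^ q ^ n = w"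
    and "s \<noteq> 0"
  shows "card ((tline (phi_polys q n) (phi_deg q n) s t - {pcls (Fv (phi_polys q n) (phi_deg q n) s t)})
      \<inter> curve_img (phi_polys q n) (phi_deg q n)) = q - 2"
proof -
  have q2: "2 \<le> q" using assms(1) by simp
  interpret affine_curve "phi_polys q n :: 'k poly list" "phi_deg q n"
    by (rule affine_curve_phi[OF q2 assms(2)])
  have "2 \<le> phi_deg q n" using q2 assms(2) phi_exponents[OF q2 assms(2)] by (simp add: phi_deg_def)
  then have "(tline (phi_polys q n) (phi_deg q n) s t - {pcls (Fv (phi_polys q n) (phi_deg q n) s t)})
      \<inter> curve_img (phi_polys q n) (phi_deg q n)
    = (\<lambda>u. pcls (Fv (phi_polys q n) (phi_deg q n) 1 u)) ` (+) (t / s) ` {w. w ^ (q - 2) = 1}"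
    using tline_residual_inter_curve[OF \<open>s \<noteq> 0\<close>]
      phi_tangent_residual_params[OF assms(1-3) frob fixed] by simp
  also have "card \<dots> = card ((+) (t / s) ` {w :: 'k. w ^ (q - 2) = 1})"
    by (intro card_image inj_onI) (simp add: pcls_affine_eq_iff)
  also have "\<dots> = card {w :: 'k. w ^ (q - 2) = 1}"
    by (intro card_image inj_onI) simp
  also have "\<dots> = q - 2"
    using assms(1,4) by (intro card_roots_of_unity) simp_all
  finally show ?thesis .
qed

theorem theorem1p1:
  fixes p q n :: nat
  assumes "prime p" and "p > 2" and "CHAR('k::alg_closed_field) = p"
    and "\<exists>e\<ge>1. q = p ^ e" and "n \<ge> 1"
    and "\<forall>\<alpha>::'k. \<alpha> ^ (q - 2) = 1 \<longrightarrow> \<alpha> ^ (q ^ n) = \<alpha>"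
  shows "is_embedding (phi_polys q n :: 'k poly list) (phi_deg q n)
    \<and> (\<forall>s t :: 'k. s \<noteq> 0 \<longrightarrow>
         finite ((tline (phi_polys q n) (phi_deg q n) s t - {pcls (Fv (phi_polys q n) (phi_deg q n) s t)})
                 \<inter> curve_img (phi_polys q n) (phi_deg q n))
       \<and> card ((tline (phi_polys q n) (phi_deg q n) s t - {pcls (Fv (phi_polys q n) (phi_deg q n) s t)})
                 \<inter> curve_img (phi_polys q n) (phi_deg q n)) = q - 2)
    \<and> gauss_birational (phi_polys q n :: 'k poly list)"
proof -
  obtain e where e: "e \<ge> 1" "q = p ^ e" using assms(4) by blast
  have char_0_iff: "of_nat m = (0 :: 'k) \<longleftrightarrow> p dvd m" for m
    using assms(3) by (simp add: of_nat_eq_0_iff_char_dvd)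
  have "p dvd q" using e by (simp add: dvd_power)
  then have q_0: "of_nat q = (0 :: 'k)" by (simp add: char_0_iff)
  have "p \<le> q" using e assms(2) by (simp add: self_le_power)
  then have q3: "3 \<le> q" using assms(2) by linarith
  have "\<not> p dvd 2" using assms(2) by (auto dest: dvd_imp_le)
  then have two: "(2 :: 'k) \<noteq> 0" and "of_nat (q - 2) \<noteq> (0 :: 'k)"
    using char_0_iff[of 2] char_0_iff[of "q - 2"] \<open>p dvd q\<close> q3
    by (auto dest: dvd_diff_nat[of p q "q - 2"])
  moreover have frob: "(x + y) ^ q = x ^ q + y ^ q" for x y :: 'k
    using assms(1,3) e(2) by (intro freshmans_dream') simp_all
  ultimately have card: "card ((tline (phi_polys q n) (phi_deg q n) s t - {pcls (Fv (phi_polys q n) (phi_deg q n) s t)})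
      \<inter> curve_img (phi_polys q n) (phi_deg q n)) = q - 2" if "s \<noteq> 0" for s t :: 'k
    using card_phi_tangent_residual[OF q3 assms(5) q_0 _ frob _ that] assms(6) by blast
  have q2: "2 \<le> q" using q3 by simp
  show ?thesis
    using is_embedding_phi[OF q2 assms(5)] gauss_birational_phi[OF q2 assms(5) q_0 two] card q3
    by (auto intro: card_ge_0_finite)
qed

end
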